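(* Let $c>0,\Delta>0$ be universal constants such that for all $A\ge0$, $\sigma>0$, all $m_1,m_2$, all $x$ with $|m_1(x)-m_2(x)|/\sqrt{\sigma^2+A}\le\Delta$ and all $t$, one has $\frac12[L(t;m_1,A\mid x)+L(t;m_2,A\mid x)]\ge c\frac{\sigma^4}{(\sigma^2+A)^2}(m_1(x)-m_2(x))^2$. Then for all $m_1,m_2:\mathcal{X}\to\mathbb{R}$ and any $t:\mathcal{X}\times\mathbb{R}\to\mathbb{R}$, writing $$R:=c\,\frac{\sigma^4}{(\sigma^2+A)^2}\int\big(m_1(x)-m_2(x)\big)^2\,\mathbf{1}\Big\{\frac{(m_1(x)-m_2(x))^2}{\sigma^2+A}\le\Delta^2\Big\}\,d\mathbb{P}^X(x),$$ the implication $L(t;m_1,A)<R\ \Longrightarrow\ L(t;m_2,A)\ge R$ holds.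
   Context: Model: $X\sim\mathbb{P}^X$, $\mu\mid X\sim N(m(X),A)$, $Z\mid\mu\sim N(\mu,\sigma^2)$. Bayes rule $t^*_{m,A}(x,z)=\frac{A}{\sigma^2+A}z+\frac{\sigma^2}{\sigma^2+A}m(x)$. Pointwise excess risk $L(t;m,A\mid x)=\mathbb{E}_{m,A}[(t(x,Z)-\mu)^2-(t^*_{m,A}(x,Z)-\mu)^2\mid X=x]$, and $L(t;m,A)=\int L(t;m,A\mid x)\,d\mathbb{P}^X(x)$ (the excess risk of $t$ over the Bayes rule for a fresh draw $(X,\mu,Z)$). Such constants $c,\Delta$ exist (Lemma 2 of the paper). *)

theory Defs
  imports "HOL-Probability.Probability"
begin

definition gauss :: "real \<Rightarrow> real \<Rightarrow> real measure" where
  "gauss mu v = (if v = 0 then return borel mu else density lborel (normal_density mu (sqrt v)))"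

definition joint_law :: "real \<Rightarrow> ('a \<Rightarrow> real) \<Rightarrow> real \<Rightarrow> 'a \<Rightarrow> (real \<times> real) measure" where
  "joint_law \<sigma> m A x =
     gauss (m x) A \<bind> (\<lambda>\<mu>. gauss \<mu> (\<sigma>\<^sup>2) \<bind> (\<lambda>z. return (borel \<Otimes>\<^sub>M borel) (\<mu>, z)))"

definition bayes_rule :: "real \<Rightarrow> ('a \<Rightarrow> real) \<Rightarrow> real \<Rightarrow> 'a \<Rightarrow> real \<Rightarrow> real" where
  "bayes_rule \<sigma> m A x z = A / (\<sigma>\<^sup>2 + A) * z + \<sigma>\<^sup>2 / (\<sigma>\<^sup>2 + A) * m x"

text \<open>Pointwise excess risk L(t; m, A | x), valued in [0, \<infinity>]: the Bayes risk is finite and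
  no larger than the risk of t, so the (truncated) ennreal difference is the exact difference.\<close>
definition pw_excess_risk :: "real \<Rightarrow> ('a \<Rightarrow> real \<Rightarrow> real) \<Rightarrow> ('a \<Rightarrow> real) \<Rightarrow> real \<Rightarrow> 'a \<Rightarrow> ennreal" where
  "pw_excess_risk \<sigma> t m A x =
     (\<integral>\<^sup>+ p. ennreal ((t x (snd p) - fst p)\<^sup>2) \<partial>joint_law \<sigma> m A x)
   - (\<integral>\<^sup>+ p. ennreal ((bayes_rule \<sigma> m A x (snd p) - fst p)\<^sup>2) \<partial>joint_law \<sigma> m A x)"

definition excess_risk :: "'a measure \<Rightarrow> real \<Rightarrow> ('a \<Rightarrow> real \<Rightarrow> real) \<Rightarrow> ('a \<Rightarrow> real) \<Rightarrow> real \<Rightarrow> ennreal" where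
  "excess_risk PX \<sigma> t m A = (\<integral>\<^sup>+ x. pw_excess_risk \<sigma> t m A x \<partial>PX)"

end

theory Submission
  imports Defs
begin

(* On the set where (m1 - m2)^2 <= Delta^2 (sigma^2 + A) the assumed pointwise bound says that
   the average of the two pointwise excess risks dominates the integrand of R, and elsewhere that
   integrand vanishes. Integrating gives L(t; m1, A) + L(t; m2, A) >= 2 R, so the two excess risks
   cannot both lie below R. The only analytic work is the measurability in x of the pointwise
   excess risk, which follows once the joint law of (mu, Z) is a measurable kernel of the prior
   mean; this in turn holds because the Gaussian family is a family of translates. *)

lemma sets_gauss [measurable_cong, simp]: "sets (gauss a v) = sets borel"
  unfolding gauss_def by simp

lemma prob_space_gauss: "v \<ge> 0 \<Longrightarrow> prob_space (gauss a v)"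
  unfolding gauss_def by (simp add: prob_space_return prob_space_normal_density)

lemma gauss_eq_distr_plus: "gauss a v = distr (gauss 0 v) borel ((+) a)"
proof (cases "v = 0")
  case True
  then show ?thesis unfolding gauss_def by (simp add: distr_return)
next
  case False
  have "density lborel (normal_density a (sqrt v))
      = density (distr lborel borel ((+) a)) (normal_density a (sqrt v))"
    by (simp add: lborel_distr_plus)
  also have "\<dots> = distr (density lborel (normal_density 0 (sqrt v))) borel ((+) a)"
    by (subst density_distr) (simp_all add: normal_density_def)
  finally show ?thesis using False unfolding gauss_def by simp
qed

lemma measurable_gauss:
  assumes "v \<ge> 0"
  shows "(\<lambda>a. gauss a v) \<in> borel \<rightarrow>\<^sub>M subprob_algebra borel"
proof -
  have "gauss 0 v \<in> space (subprob_algebra borel)"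
    using prob_space_gauss[OF assms]
    by (simp add: space_subprob_algebra prob_space_imp_subprob_space)
  then have "(\<lambda>a. distr (gauss 0 v) borel ((+) a)) \<in> borel \<rightarrow>\<^sub>M subprob_algebra borel"
    by (intro measurable_distr2[where M = borel]) auto
  then show ?thesis by (subst gauss_eq_distr_plus)
qed

lemma measurable_joint_law:
  assumes "A \<ge> 0" and [measurable]: "m \<in> borel_measurable M"
  shows "joint_law \<sigma> m A \<in> M \<rightarrow>\<^sub>M subprob_algebra (borel \<Otimes>\<^sub>M borel)"
proof -
  note measurable_gauss[OF assms(1), measurable] measurable_gauss[of "\<sigma>\<^sup>2", simplified, measurable]
  show ?thesis unfolding joint_law_def[abs_def] by measurable
qed

lemma measurable_square_loss_risk:
  assumes "A \<ge> 0" and [measurable]: "m \<in> borel_measurable M"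
    and [measurable]: "(\<lambda>(x, z). g x z) \<in> borel_measurable (M \<Otimes>\<^sub>M borel)"
  shows "(\<lambda>x. \<integral>\<^sup>+p. ennreal ((g x (snd p) - fst p)\<^sup>2) \<partial>joint_law \<sigma> m A x) \<in> borel_measurable M"
  using measurable_joint_law[OF assms(1,2)] by (intro nn_integral_measurable_subprob_algebra2) measurable

lemma measurable_pw_excess_risk:
  assumes "A \<ge> 0" and [measurable]: "m \<in> borel_measurable M"
    and "(\<lambda>(x, z). t x z) \<in> borel_measurable (M \<Otimes>\<^sub>M borel)"
  shows "pw_excess_risk \<sigma> t m A \<in> borel_measurable M"
proof -
  have "(\<lambda>(x, z). bayes_rule \<sigma> m A x z) \<in> borel_measurable (M \<Otimes>\<^sub>M borel)"
    unfolding bayes_rule_def by measurable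
  with assms show ?thesis
    unfolding pw_excess_risk_def[abs_def]
    using measurable_square_loss_risk[of A m M t \<sigma>]
      measurable_square_loss_risk[of A m M "bayes_rule \<sigma> m A" \<sigma>]
    by measurable
qed

lemma nn_integral_le_average:
  assumes [measurable]: "f \<in> borel_measurable M" "g \<in> borel_measurable M"
    and "\<And>x. x \<in> space M \<Longrightarrow> h x \<le> (f x + g x) / 2"
  shows "2 * (\<integral>\<^sup>+x. h x \<partial>M) \<le> (\<integral>\<^sup>+x. f x \<partial>M) + (\<integral>\<^sup>+x. g x \<partial>M)"
proof -
  have "(\<integral>\<^sup>+x. h x \<partial>M) \<le> (\<integral>\<^sup>+x. (f x + g x) / 2 \<partial>M)"
    using assms(3) by (rule nn_integral_mono)
  also have "\<dots> = ((\<integral>\<^sup>+x. f x \<partial>M) + (\<integral>\<^sup>+x. g x \<partial>M)) / 2"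
    by (simp add: nn_integral_divide nn_integral_add)
  finally have "2 * (\<integral>\<^sup>+x. h x \<partial>M) \<le> 2 * (((\<integral>\<^sup>+x. f x \<partial>M) + (\<integral>\<^sup>+x. g x \<partial>M)) / 2)"
    by (rule mult_left_mono) simp
  also have "2 * (a / 2) = (a::ennreal)" for a
    by (simp add: ennreal_times_divide mult.commute[of 2] mult_divide_eq_ennreal)
  finally show ?thesis .
qed

lemma ennreal_le_of_twice_le_add:
  fixes a b r :: ennreal
  assumes "2 * r \<le> a + b" and "a < r"
  shows "r \<le> b"
proof (rule ccontr)
  assume "\<not> r \<le> b"
  then have "a + b < r + r"
    using assms(2) by (intro add_strict_mono) auto
  with assms(1) show False by (simp add: mult_2)
qed

theorem lemma3:
  fixes PX :: "'a measure" and c \<Delta> \<sigma> A :: real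
    and m1 m2 :: "'a \<Rightarrow> real" and t :: "'a \<Rightarrow> real \<Rightarrow> real"
  assumes PX: "prob_space PX"
    and c_pos: "c > 0" and \<Delta>_pos: "\<Delta> > 0"
    and lemma2: "\<And>A' \<sigma>' (n1 :: 'a \<Rightarrow> real) n2 x (s :: 'a \<Rightarrow> real \<Rightarrow> real).
         A' \<ge> 0 \<Longrightarrow> \<sigma>' > 0 \<Longrightarrow> s x \<in> borel_measurable borel \<Longrightarrow>
         \<bar>n1 x - n2 x\<bar> / sqrt (\<sigma>'\<^sup>2 + A') \<le> \<Delta> \<Longrightarrow>
         (pw_excess_risk \<sigma>' s n1 A' x + pw_excess_risk \<sigma>' s n2 A' x) / 2
           \<ge> ennreal (c * \<sigma>' ^ 4 / (\<sigma>'\<^sup>2 + A')\<^sup>2 * (n1 x - n2 x)\<^sup>2)"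
    and \<sigma>_pos: "\<sigma> > 0" and A_nonneg: "A \<ge> 0"
    and m1_meas: "m1 \<in> borel_measurable PX" and m2_meas: "m2 \<in> borel_measurable PX"
    and t_meas: "(\<lambda>(x, z). t x z) \<in> borel_measurable (PX \<Otimes>\<^sub>M borel)"
  shows "let R = ennreal (c * \<sigma> ^ 4 / (\<sigma>\<^sup>2 + A)\<^sup>2) *
                 (\<integral>\<^sup>+ x. ennreal ((m1 x - m2 x)\<^sup>2 *
                     indicator {x. (m1 x - m2 x)\<^sup>2 / (\<sigma>\<^sup>2 + A) \<le> \<Delta>\<^sup>2} x) \<partial>PX)
         in excess_risk PX \<sigma> t m1 A < R \<longrightarrow> excess_risk PX \<sigma> t m2 A \<ge> R"
proof -
  define K where "K = c * \<sigma> ^ 4 / (\<sigma>\<^sup>2 + A)\<^sup>2"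
  define h where "h = (\<lambda>x. (m1 x - m2 x)\<^sup>2 *
                     indicator {x. (m1 x - m2 x)\<^sup>2 / (\<sigma>\<^sup>2 + A) \<le> \<Delta>\<^sup>2} x :: real)"
  have K_nonneg: "K \<ge> 0"
    unfolding K_def using c_pos by simp
  have pointwise: "ennreal K * ennreal (h x)
      \<le> (pw_excess_risk \<sigma> t m1 A x + pw_excess_risk \<sigma> t m2 A x) / 2"
    if x: "x \<in> space PX" for x
  proof (cases "(m1 x - m2 x)\<^sup>2 / (\<sigma>\<^sup>2 + A) \<le> \<Delta>\<^sup>2")
    case True
    have "t x \<in> borel_measurable borel"
      using measurable_compose[OF measurable_Pair1'[OF x] t_meas] by simp
    moreover have "\<bar>m1 x - m2 x\<bar> / sqrt (\<sigma>\<^sup>2 + A) \<le> \<Delta>"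
      using real_sqrt_le_mono[OF True] \<Delta>_pos by (simp add: real_sqrt_divide)
    ultimately have "ennreal (K * (m1 x - m2 x)\<^sup>2)
        \<le> (pw_excess_risk \<sigma> t m1 A x + pw_excess_risk \<sigma> t m2 A x) / 2"
      using lemma2[of A \<sigma> t x m1 m2] A_nonneg \<sigma>_pos unfolding K_def by simp
    then show ?thesis
      using True K_nonneg unfolding h_def by (simp add: ennreal_mult)
  qed (simp add: h_def)
  have "(\<lambda>x. ennreal (h x)) \<in> borel_measurable PX"
    unfolding h_def using m1_meas m2_meas by measurable
  then have "2 * (ennreal K * (\<integral>\<^sup>+x. ennreal (h x) \<partial>PX))
      = 2 * (\<integral>\<^sup>+x. ennreal K * ennreal (h x) \<partial>PX)"
    by (simp add: nn_integral_cmult)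
  also have "\<dots> \<le> excess_risk PX \<sigma> t m1 A + excess_risk PX \<sigma> t m2 A"
    unfolding excess_risk_def using pointwise
    by (intro nn_integral_le_average measurable_pw_excess_risk A_nonneg m1_meas m2_meas t_meas)
  finally show ?thesis
    using ennreal_le_of_twice_le_add unfolding Let_def K_def h_def by blast
qed

end
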